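(* Let $n\ge 2$, $d\ge 3$ be integers and suppose there is a proper real algebraic subvariety $\Psi\subset\mathrm{Sym}(n,d)$ such that every $\mathcal{T}\in\mathrm{Sym}(n,d)\setminus\Psi$ has a unique best rank one approximation, and this approximation is symmetric. Then every $\mathcal{T}\in\mathrm{Sym}(n,d)$ has a symmetric best rank one approximation.
   Context: $\mathrm{Sym}(n,d)$ is the space of real tensors $[t_{i_1,\ldots,i_d}]_{i_1,\ldots,i_d=1}^n$ invariant under all permutations of indices. Norm $\|\mathcal{T}\|=\sqrt{\sum t_{i_1,\ldots,i_d}^2}$; $\mathrm{S}^{n-1}$ is the Euclidean unit sphere in $\mathbb{R}^n$. A best rank one approximation of $\mathcal{T}$ is a tensor $a\,\mathbf{u}_1\otimes\cdots\otimes\mathbf{u}_d$ ($a\in\mathbb{R}$, $\mathbf{u}_j\in\mathrm{S}^{n-1}$) minimizing $\|\mathcal{T}-s\,\mathbf{x}_1\otimes\cdots\otimes\mathbf{x}_d\|$ over $s\in\mathbb{R}$, $\mathbf{x}_j\in\mathrm{S}^{n-1}$; it is symmetric if it is a symmetric tensor, i.e. of the form $b\,\mathbf{u}\otimes\cdots\otimes\mathbf{u}$. *)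

theory Defs
  imports "HOL-Analysis.Analysis" "HOL-Library.Multiset"
begin

text \<open>Tensors of order d over R^n are modelled as functions on index lists
  (nat list => real); only lists of length d with entries < n are relevant,
  and tensors are required to vanish elsewhere (canonical representative).
  Indices are 0-based.\<close>

definition idx :: "nat \<Rightarrow> nat \<Rightarrow> nat list set" where
  "idx n d = {is. length is = d \<and> set is \<subseteq> {..<n}}"

definition tensors :: "nat \<Rightarrow> nat \<Rightarrow> (nat list \<Rightarrow> real) set" where
  "tensors n d = {T. \<forall>is. is \<notin> idx n d \<longrightarrow> T is = 0}"

definition Sym :: "nat \<Rightarrow> nat \<Rightarrow> (nat list \<Rightarrow> real) set" where
  "Sym n d = {T \<in> tensors n d. \<forall>is \<in> idx n d. \<forall>js. mset js = mset is \<longrightarrow> T js = T is}"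

definition tnorm :: "nat \<Rightarrow> nat \<Rightarrow> (nat list \<Rightarrow> real) \<Rightarrow> real" where
  "tnorm n d T = sqrt (\<Sum>is\<in>idx n d. (T is)^2)"

definition sphere_n :: "nat \<Rightarrow> (nat \<Rightarrow> real) set" where
  "sphere_n n = {x. (\<Sum>i<n. (x i)^2) = 1}"

text \<open>The rank one tensor s * x_1 (x) ... (x) x_d (x j is the (j+1)-th factor).\<close>
definition outer :: "nat \<Rightarrow> nat \<Rightarrow> real \<Rightarrow> (nat \<Rightarrow> nat \<Rightarrow> real) \<Rightarrow> (nat list \<Rightarrow> real)" where
  "outer n d s x = (\<lambda>is. if is \<in> idx n d then s * (\<Prod>j<d. x j (is ! j)) else 0)"

definition unit_factors :: "nat \<Rightarrow> nat \<Rightarrow> (nat \<Rightarrow> nat \<Rightarrow> real) set" where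
  "unit_factors n d = {x. \<forall>j<d. x j \<in> sphere_n n}"

definition best_r1 :: "nat \<Rightarrow> nat \<Rightarrow> (nat list \<Rightarrow> real) \<Rightarrow> (nat list \<Rightarrow> real) set" where
  "best_r1 n d T = {outer n d a u | a u. u \<in> unit_factors n d \<and>
     (\<forall>s. \<forall>x \<in> unit_factors n d.
        tnorm n d (\<lambda>is. T is - outer n d a u is) \<le> tnorm n d (\<lambda>is. T is - outer n d s x is))}"

inductive_set poly_funs :: "nat \<Rightarrow> nat \<Rightarrow> ((nat list \<Rightarrow> real) \<Rightarrow> real) set"
  for n d where
  const: "(\<lambda>T. c) \<in> poly_funs n d"
| coord: "is \<in> idx n d \<Longrightarrow> (\<lambda>T. T is) \<in> poly_funs n d"
| add: "p \<in> poly_funs n d \<Longrightarrow> q \<in> poly_funs n d \<Longrightarrow> (\<lambda>T. p T + q T) \<in> poly_funs n d"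
| mult: "p \<in> poly_funs n d \<Longrightarrow> q \<in> poly_funs n d \<Longrightarrow> (\<lambda>T. p T * q T) \<in> poly_funs n d"

definition alg_subvariety :: "nat \<Rightarrow> nat \<Rightarrow> (nat list \<Rightarrow> real) set \<Rightarrow> bool" where
  "alg_subvariety n d \<Psi> \<longleftrightarrow> (\<exists>P \<subseteq> poly_funs n d. \<Psi> = {T \<in> Sym n d. \<forall>p\<in>P. p T = 0})"

end

theory Submission
  imports Defs "HOL-Computational_Algebra.Polynomial"
begin

text \<open>A proper subvariety \<Psi> misses all but finitely many points of the segment from
  any symmetric tensor T to a point T1 outside \<Psi>, since a polynomial vanishing at T1
  restricts to a nonzero univariate polynomial on the segment. Hence T is a limit of
  tensors T_k \<notin> \<Psi>, each having a symmetric best rank one approximation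
  a_k u_k. These are bounded in terms of T_k, so a subsequence of (a_k, u_k)
  converges; optimality and symmetry survive in the limit.\<close>

definition is_best_r1 :: "nat \<Rightarrow> nat \<Rightarrow> (nat list \<Rightarrow> real) \<Rightarrow> real \<Rightarrow> (nat \<Rightarrow> nat \<Rightarrow> real) \<Rightarrow> bool" where
  "is_best_r1 n d T a u \<longleftrightarrow> u \<in> unit_factors n d \<and>
     (\<forall>s. \<forall>x \<in> unit_factors n d.
        tnorm n d (\<lambda>is. T is - outer n d a u is) \<le> tnorm n d (\<lambda>is. T is - outer n d s x is))"

lemma best_r1_iff_is_best_r1: "B \<in> best_r1 n d T \<longleftrightarrow> (\<exists>a u. B = outer n d a u \<and> is_best_r1 n d T a u)"
  by (auto simp: best_r1_def is_best_r1_def)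

lemma finite_idx: "finite (idx n d)"
proof -
  have "idx n d = {xs. set xs \<subseteq> {..<n} \<and> length xs = d}" by (auto simp: idx_def)
  thus ?thesis using finite_lists_length_eq[of "{..<n}" d] by simp
qed

lemma poly_funs_on_line:
  assumes "p \<in> poly_funs n d"
  shows "\<exists>q. \<forall>t. p (\<lambda>is. A is + t * C is) = poly q t"
  using assms
proof induction
  case (const c) show ?case by (rule exI[of _ "[:c:]"]) simp
next
  case (coord xs) show ?case by (rule exI[of _ "[:A xs, C xs:]"]) (simp add: algebra_simps)
next
  case (add p q)
  then obtain q1 q2 where "\<forall>t. p (\<lambda>is. A is + t * C is) = poly q1 t" "\<forall>t. q (\<lambda>is. A is + t * C is) = poly q2 t"
    by blast
  then show ?case by (intro exI[of _ "q1 + q2"]) simp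
next
  case (mult p q)
  then obtain q1 q2 where "\<forall>t. p (\<lambda>is. A is + t * C is) = poly q1 t" "\<forall>t. q (\<lambda>is. A is + t * C is) = poly q2 t"
    by blast
  then show ?case by (intro exI[of _ "q1 * q2"]) simp
qed

lemma Sym_segment:
  assumes "A \<in> Sym n d" and "C \<in> Sym n d"
  shows "(\<lambda>is. A is + t * (C is - A is)) \<in> Sym n d"
  unfolding Sym_def tensors_def
proof (intro CollectI conjI allI impI ballI)
  fix xs assume "xs \<notin> idx n d"
  then show "A xs + t * (C xs - A xs) = 0" using assms by (simp add: Sym_def tensors_def)
next
  fix xs ys assume "xs \<in> idx n d" and "mset ys = mset xs"
  then have "A ys = A xs" and "C ys = C xs" using assms unfolding Sym_def by blast+
  then show "A ys + t * (C ys - A ys) = A xs + t * (C xs - A xs)" by simp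
qed

lemma alg_subvariety_complement_dense:
  assumes "alg_subvariety n d \<Psi>" and "\<Psi> \<noteq> Sym n d" and "T \<in> Sym n d"
  obtains TT where "\<And>k. TT k \<in> Sym n d - \<Psi>" and "\<And>xs. (\<lambda>k. TT k xs) \<longlonglongrightarrow> T xs"
proof -
  obtain P where P: "P \<subseteq> poly_funs n d" and \<Psi>: "\<Psi> = {T \<in> Sym n d. \<forall>p\<in>P. p T = 0}"
    using assms(1) by (auto simp: alg_subvariety_def)
  obtain T1 p where T1: "T1 \<in> Sym n d" and p: "p \<in> P" "p T1 \<noteq> 0"
    using assms(2) \<Psi> by blast
  define L where "L t = (\<lambda>is. T is + t * (T1 is - T is))" for t
  obtain q where q: "\<And>t. p (L t) = poly q t"
    using poly_funs_on_line[OF subsetD[OF P p(1)], of T "\<lambda>is. T1 is - T is"] unfolding L_def by blast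
  have "L 1 = T1" by (simp add: L_def)
  then have "q \<noteq> 0" using q p(2) by force
  then have roots: "finite {t. poly q t = 0}" by (rule poly_roots_finite)
  have "\<exists>t. 0 < t \<and> t < 1 / real (Suc k) \<and> poly q t \<noteq> 0" for k
  proof -
    have "infinite ({0<..<1 / real (Suc k)} - {t. poly q t = 0})"
      by (rule Diff_infinite_finite[OF roots]) simp
    then show ?thesis by (auto dest: infinite_imp_nonempty)
  qed
  then obtain tt where tt: "\<And>k. 0 < tt k \<and> tt k < 1 / real (Suc k) \<and> poly q (tt k) \<noteq> 0"
    by metis
  have "tt \<longlonglongrightarrow> 0"
    by (rule Lim_null_comparison[OF always_eventually LIMSEQ_Suc[OF lim_1_over_n]])
      (use tt in \<open>auto simp: less_imp_le\<close>)
  then have "(\<lambda>k. L (tt k) xs) \<longlonglongrightarrow> T xs + 0 * (T1 xs - T xs)" for xs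
    unfolding L_def by (intro tendsto_intros)
  moreover have "L (tt k) \<in> Sym n d - \<Psi>" for k
    using Sym_segment[OF assms(3) T1, of "tt k", folded L_def] tt[of k] q p(1) \<Psi> by (auto intro!: bexI[of _ p])
  ultimately show thesis using that[of "\<lambda>k. L (tt k)"] by simp
qed

lemma tnorm_tendsto:
  assumes "\<And>xs. xs \<in> idx n d \<Longrightarrow> (\<lambda>k. F k xs) \<longlonglongrightarrow> G xs"
  shows "(\<lambda>k. tnorm n d (F k)) \<longlonglongrightarrow> tnorm n d G"
  unfolding tnorm_def by (intro tendsto_real_sqrt tendsto_sum tendsto_power assms)

lemma outer_tendsto:
  assumes "a \<longlonglongrightarrow> a0" and "\<And>j i. j < d \<Longrightarrow> i < n \<Longrightarrow> (\<lambda>k. u k j i) \<longlonglongrightarrow> u0 j i"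
  shows "(\<lambda>k. outer n d (a k) (u k) xs) \<longlonglongrightarrow> outer n d a0 u0 xs"
proof (cases "xs \<in> idx n d")
  case True
  then have "\<And>j. j < d \<Longrightarrow> xs ! j < n" by (auto simp: idx_def dest!: nth_mem)
  then show ?thesis using True unfolding outer_def
    by (auto intro!: tendsto_mult tendsto_prod assms)
next
  case False then show ?thesis by (simp add: outer_def)
qed

lemma Sym_closed_sequentially:
  assumes "\<And>k. F k \<in> Sym n d" and "\<And>xs. (\<lambda>k. F k xs) \<longlonglongrightarrow> G xs"
  shows "G \<in> Sym n d"
  unfolding Sym_def tensors_def
proof (intro CollectI conjI allI impI ballI)
  fix xs assume "xs \<notin> idx n d"
  then have "(\<lambda>k. F k xs) = (\<lambda>k. 0)" using assms(1) unfolding Sym_def tensors_def by blast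
  then show "G xs = 0" using assms(2)[of xs] LIMSEQ_unique tendsto_const by metis
next
  fix xs ys assume "xs \<in> idx n d" and "mset ys = mset xs"
  then have "(\<lambda>k. F k ys) = (\<lambda>k. F k xs)" using assms(1) unfolding Sym_def by blast
  then show "G ys = G xs" using assms(2) LIMSEQ_unique by metis
qed

lemma unit_factors_closed_sequentially:
  assumes "\<And>k. u k \<in> unit_factors n d"
    and "\<And>j i. j < d \<Longrightarrow> i < n \<Longrightarrow> (\<lambda>k. u k j i) \<longlonglongrightarrow> u0 j i"
  shows "u0 \<in> unit_factors n d"
  unfolding unit_factors_def sphere_n_def
proof (intro allI impI CollectI)
  fix j assume j: "j < d"
  have "(\<lambda>k. \<Sum>i<n. (u k j i)^2) \<longlonglongrightarrow> (\<Sum>i<n. (u0 j i)^2)"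
    by (intro tendsto_sum tendsto_power assms(2) j) simp
  moreover have "(\<lambda>k. \<Sum>i<n. (u k j i)^2) = (\<lambda>k. 1)"
    using assms(1) j by (auto simp: unit_factors_def sphere_n_def)
  ultimately show "(\<Sum>i<n. (u0 j i)^2) = 1" using LIMSEQ_unique tendsto_const by metis
qed

lemma is_best_r1_limit:
  assumes "\<And>k. is_best_r1 n d (TT k) (a k) (u k)"
    and "\<And>xs. (\<lambda>k. TT k xs) \<longlonglongrightarrow> T xs" and "a \<longlonglongrightarrow> a0"
    and "\<And>j i. j < d \<Longrightarrow> i < n \<Longrightarrow> (\<lambda>k. u k j i) \<longlonglongrightarrow> u0 j i"
  shows "is_best_r1 n d T a0 u0"
  unfolding is_best_r1_def
proof (intro conjI allI ballI)
  show "u0 \<in> unit_factors n d"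
    by (rule unit_factors_closed_sequentially[of u]) (use assms(1,4) in \<open>auto simp: is_best_r1_def\<close>)
  fix s x assume x: "x \<in> unit_factors n d"
  show "tnorm n d (\<lambda>xs. T xs - outer n d a0 u0 xs) \<le> tnorm n d (\<lambda>xs. T xs - outer n d s x xs)"
  proof (rule tendsto_le[OF trivial_limit_sequentially])
    show "(\<lambda>k. tnorm n d (\<lambda>xs. TT k xs - outer n d s x xs))
        \<longlonglongrightarrow> tnorm n d (\<lambda>xs. T xs - outer n d s x xs)"
      by (intro tnorm_tendsto tendsto_diff assms(2) tendsto_const)
    show "(\<lambda>k. tnorm n d (\<lambda>xs. TT k xs - outer n d (a k) (u k) xs))
        \<longlonglongrightarrow> tnorm n d (\<lambda>xs. T xs - outer n d a0 u0 xs)"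
      by (intro tnorm_tendsto tendsto_diff assms(2) outer_tendsto assms(3,4))
    show "\<forall>\<^sub>F k in sequentially. tnorm n d (\<lambda>xs. TT k xs - outer n d (a k) (u k) xs)
        \<le> tnorm n d (\<lambda>xs. TT k xs - outer n d s x xs)"
      using assms(1) x by (intro always_eventually) (auto simp: is_best_r1_def)
  qed
qed

lemma tnorm_le_tnorm_diff_add: "tnorm n d B \<le> tnorm n d T + tnorm n d (\<lambda>xs. T xs - B xs)"
proof -
  have "L2_set (\<lambda>xs. T xs + (B xs - T xs)) (idx n d)
      \<le> L2_set T (idx n d) + L2_set (\<lambda>xs. B xs - T xs) (idx n d)"
    by (rule L2_set_triangle_ineq)
  moreover have "L2_set (\<lambda>xs. B xs - T xs) (idx n d) = L2_set (\<lambda>xs. T xs - B xs) (idx n d)"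
    by (simp add: L2_set_def power2_commute)
  ultimately show ?thesis by (simp add: tnorm_def L2_set_def)
qed

lemma coeff_sq_le_tnorm_outer:
  assumes u: "u \<in> unit_factors n d" and n: "0 < n"
  shows "a^2 \<le> real n ^ d * (tnorm n d (outer n d a u))^2"
proof -
  \<comment> \<open>Every unit factor has an entry of square at least 1/n; pick one per factor.\<close>
  have "\<exists>i<n. 1 / real n \<le> (u j i)^2" if j: "j < d" for j
  proof (rule ccontr)
    assume "\<not> ?thesis"
    then have "(\<Sum>i<n. (u j i)^2) < (\<Sum>i<n. 1 / real n)"
      by (intro sum_strict_mono) (use n in auto)
    also have "\<dots> = 1" using n by simp
    finally show False using u j by (auto simp: unit_factors_def sphere_n_def)
  qed
  then obtain i where i: "\<And>j. j < d \<Longrightarrow> i j < n \<and> 1 / real n \<le> (u j (i j))^2" by metis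
  define xs where "xs = map i [0..<d]"
  have xs: "xs \<in> idx n d" using i by (auto simp: xs_def idx_def)
  have "(outer n d a u xs)^2 = a^2 * (\<Prod>j<d. (u j (i j))^2)"
    using xs by (simp add: outer_def xs_def power_mult_distrib prod_power_distrib)
  moreover have "(1 / real n)^d \<le> (\<Prod>j<d. (u j (i j))^2)"
    using prod_mono[of "{..<d}" "\<lambda>_. 1 / real n" "\<lambda>j. (u j (i j))^2"] i by simp
  ultimately have "a^2 * (1 / real n)^d \<le> (outer n d a u xs)^2"
    by (simp add: mult_left_mono)
  also have "\<dots> \<le> (\<Sum>ys\<in>idx n d. (outer n d a u ys)^2)"
    by (rule member_le_sum) (use xs finite_idx in auto)
  also have "\<dots> = (tnorm n d (outer n d a u))^2"
    by (simp add: tnorm_def sum_nonneg)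
  finally have "real n ^ d * (a^2 * (1 / real n)^d) \<le> real n ^ d * (tnorm n d (outer n d a u))^2"
    by (simp add: mult_left_mono)
  then show ?thesis using n by (simp add: field_simps)
qed

lemma is_best_r1_coeff_bound:
  assumes "is_best_r1 n d T a u" and n: "0 < n"
  shows "\<bar>a\<bar> \<le> 2 * sqrt (real n ^ d) * tnorm n d T"
proof -
  define e where "e = (\<lambda>(j::nat) (i::nat). if i = 0 then 1 else (0::real))"
  have e: "e \<in> unit_factors n d"
  proof -
    have "(\<Sum>i<n. (e j i)^2) = (\<Sum>i<n. if i = 0 then 1 else 0)" for j
      by (rule sum.cong) (auto simp: e_def)
    then show ?thesis using n by (auto simp: unit_factors_def sphere_n_def)
  qed
  have "tnorm n d (\<lambda>xs. T xs - outer n d a u xs) \<le> tnorm n d (\<lambda>xs. T xs - outer n d 0 e xs)"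
    using assms(1) e by (auto simp: is_best_r1_def)
  also have "(\<lambda>xs. T xs - outer n d 0 e xs) = T" by (simp add: outer_def fun_eq_iff)
  finally have "tnorm n d (outer n d a u) \<le> 2 * tnorm n d T"
    using tnorm_le_tnorm_diff_add[of n d "outer n d a u" T] by simp
  then have "(tnorm n d (outer n d a u))^2 \<le> (2 * tnorm n d T)^2"
    by (intro power_mono) (simp_all add: tnorm_def sum_nonneg)
  then have "real n ^ d * (tnorm n d (outer n d a u))^2 \<le> real n ^ d * (2 * tnorm n d T)^2"
    by (rule mult_left_mono) simp
  then have "\<bar>a\<bar>^2 \<le> (2 * sqrt (real n ^ d) * tnorm n d T)^2"
    using coeff_sq_le_tnorm_outer[OF _ n, of u d a] assms(1)
    by (simp add: is_best_r1_def power_mult_distrib)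
  then show ?thesis by (rule power2_le_imp_le) (simp add: tnorm_def sum_nonneg)
qed

lemma convergent_subseq_finite_family:
  fixes X :: "nat \<Rightarrow> 'c \<Rightarrow> real"
  assumes "finite C" and "\<And>c. c \<in> C \<Longrightarrow> bounded (range (\<lambda>k. X k c))"
  shows "\<exists>r. strict_mono r \<and> (\<forall>c\<in>C. convergent (\<lambda>k. X (r k) c))"
  using assms
proof (induction C rule: finite_induct)
  case empty then show ?case by (intro exI[of _ id]) (auto simp: strict_mono_def)
next
  case (insert c C)
  then obtain r where r: "strict_mono r" "\<forall>c\<in>C. convergent (\<lambda>k. X (r k) c)" by auto
  have "bounded (range (\<lambda>k. X (r k) c))"
    by (rule bounded_subset[OF insert.prems[of c]]) auto
  then obtain l r2 where r2: "strict_mono r2" "((\<lambda>k. X (r k) c) \<circ> r2) \<longlonglongrightarrow> l"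
    using bounded_imp_convergent_subsequence by blast
  have "convergent (\<lambda>k. X (r (r2 k)) c')" if "c' \<in> insert c C" for c'
    using that
  proof
    assume "c' = c" then show ?thesis using r2 by (auto simp: convergent_def o_def)
  next
    assume "c' \<in> C"
    then obtain L where "(\<lambda>k. X (r k) c') \<longlonglongrightarrow> L" using r by (auto simp: convergent_def)
    from LIMSEQ_subseq_LIMSEQ[OF this r2(1)] show ?thesis by (auto simp: convergent_def o_def)
  qed
  then show ?case using strict_mono_o[OF r(1) r2(1)] by (auto simp: o_def)
qed

lemma rank_one_convergent_subseq:
  fixes a :: "nat \<Rightarrow> real"
  assumes "bounded (range a)" and "\<And>k. u k \<in> unit_factors n d"
  obtains r a0 u0 where "strict_mono r" and "(\<lambda>k. a (r k)) \<longlonglongrightarrow> a0"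
    and "\<And>j i. j < d \<Longrightarrow> i < n \<Longrightarrow> (\<lambda>k. u (r k) j i) \<longlonglongrightarrow> u0 j i"
proof -
  obtain a0 r1 where r1: "strict_mono r1" "(a \<circ> r1) \<longlonglongrightarrow> a0"
    using bounded_imp_convergent_subsequence[OF assms(1)] by blast
  have "\<bar>u k j i\<bar> \<le> 1" if "j < d" "i < n" for k j i
  proof -
    have "(u k j i)^2 \<le> (\<Sum>i<n. (u k j i)^2)" by (rule member_le_sum) (use that in auto)
    also have "\<dots> = 1" using assms(2)[of k] that by (auto simp: unit_factors_def sphere_n_def)
    finally show ?thesis by (simp add: abs_square_le_1)
  qed
  then have "\<exists>r2. strict_mono r2 \<and>
      (\<forall>c\<in>{..<d} \<times> {..<n}. convergent (\<lambda>k. (\<lambda>k (j, i). u (r1 k) j i) (r2 k) c))"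
    by (intro convergent_subseq_finite_family) (auto simp: bounded_iff intro!: exI[of _ 1])
  then obtain r2 where r2: "strict_mono r2"
    and conv: "\<And>j i. j < d \<Longrightarrow> i < n \<Longrightarrow> convergent (\<lambda>k. u (r1 (r2 k)) j i)"
    by fastforce
  show thesis
  proof
    show "strict_mono (r1 \<circ> r2)" using r1(1) r2 by (rule strict_mono_o)
    show "(\<lambda>k. a ((r1 \<circ> r2) k)) \<longlonglongrightarrow> a0"
      using LIMSEQ_subseq_LIMSEQ[OF r1(2) r2] by (simp add: o_def)
    show "(\<lambda>k. u ((r1 \<circ> r2) k) j i) \<longlonglongrightarrow> lim (\<lambda>k. u ((r1 \<circ> r2) k) j i)" if "j < d" "i < n" for j i
      using conv[OF that] by (simp add: convergent_LIMSEQ_iff)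
  qed
qed

lemma symmetric_best_r1_limit:
  assumes n: "0 < n" and lim: "\<And>xs. (\<lambda>k. TT k xs) \<longlonglongrightarrow> T xs"
    and B: "\<And>k. B k \<in> best_r1 n d (TT k) \<inter> Sym n d"
  shows "\<exists>B \<in> best_r1 n d T. B \<in> Sym n d"
proof -
  have "\<forall>k. \<exists>a u. B k = outer n d a u \<and> is_best_r1 n d (TT k) a u"
    using B best_r1_iff_is_best_r1 by blast
  from choice[OF this] obtain a where "\<forall>k. \<exists>u. B k = outer n d (a k) u \<and> is_best_r1 n d (TT k) (a k) u" ..
  from choice[OF this] obtain u where "\<forall>k. B k = outer n d (a k) (u k) \<and> is_best_r1 n d (TT k) (a k) (u k)" ..
  then have B_eq: "\<And>k. B k = outer n d (a k) (u k)" and best: "\<And>k. is_best_r1 n d (TT k) (a k) (u k)"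
    by simp_all
  have "(\<lambda>k. tnorm n d (TT k)) \<longlonglongrightarrow> tnorm n d T" by (rule tnorm_tendsto[OF lim])
  then have "Bseq (\<lambda>k. tnorm n d (TT k))" by (rule convergent_imp_Bseq[OF convergentI])
  then obtain K where K: "\<And>k. tnorm n d (TT k) \<le> K"
    by (metis BseqE abs_le_D1 real_norm_def)
  have "\<bar>a k\<bar> \<le> 2 * sqrt (real n ^ d) * K" for k
    using is_best_r1_coeff_bound[OF best n, of k] mult_left_mono[OF K[of k], of "2 * sqrt (real n ^ d)"]
    by simp
  then have "bounded (range a)" by (auto simp: bounded_iff)
  moreover have "\<And>k. u k \<in> unit_factors n d" using best by (simp add: is_best_r1_def)
  ultimately obtain r a0 u0 where r: "strict_mono r" and a0: "(\<lambda>k. a (r k)) \<longlonglongrightarrow> a0"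
    and u0: "\<And>j i. j < d \<Longrightarrow> i < n \<Longrightarrow> (\<lambda>k. u (r k) j i) \<longlonglongrightarrow> u0 j i"
    by (rule rank_one_convergent_subseq[where a = a and u = u]) blast
  have lim_r: "(\<lambda>k. TT (r k) xs) \<longlonglongrightarrow> T xs" for xs
    using LIMSEQ_subseq_LIMSEQ[OF lim r] by (simp add: o_def)
  have "is_best_r1 n d T a0 u0"
    by (rule is_best_r1_limit[OF best lim_r a0 u0])
  moreover have "outer n d a0 u0 \<in> Sym n d"
  proof (rule Sym_closed_sequentially[of "\<lambda>k. B (r k)"])
    show "B (r k) \<in> Sym n d" for k using B by blast
    show "(\<lambda>k. B (r k) xs) \<longlonglongrightarrow> outer n d a0 u0 xs" for xs
      unfolding B_eq by (rule outer_tendsto[OF a0 u0])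
  qed
  ultimately show ?thesis using best_r1_iff_is_best_r1 by blast
qed

theorem proposition3p5:
  fixes n d :: nat and \<Psi> :: "(nat list \<Rightarrow> real) set"
  assumes "n \<ge> 2" and "d \<ge> 3"
    and "alg_subvariety n d \<Psi>" and "\<Psi> \<noteq> Sym n d"
    and "\<forall>T \<in> Sym n d - \<Psi>. \<exists>B. best_r1 n d T = {B} \<and> B \<in> Sym n d"
  shows "\<forall>T \<in> Sym n d. \<exists>B \<in> best_r1 n d T. B \<in> Sym n d"
proof
  fix T assume T: "T \<in> Sym n d"
  obtain TT where TT: "\<And>k. TT k \<in> Sym n d - \<Psi>"
    and lim: "\<And>xs. (\<lambda>k. TT k xs) \<longlonglongrightarrow> T xs"
    by (rule alg_subvariety_complement_dense[OF assms(3,4) T]) blast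
  have "\<forall>k. \<exists>B. B \<in> best_r1 n d (TT k) \<inter> Sym n d"
  proof
    fix k
    obtain B where "best_r1 n d (TT k) = {B}" and "B \<in> Sym n d" using assms(5) TT[of k] by blast
    then show "\<exists>B. B \<in> best_r1 n d (TT k) \<inter> Sym n d" by blast
  qed
  from choice[OF this] obtain B where B: "\<forall>k. B k \<in> best_r1 n d (TT k) \<inter> Sym n d" ..
  show "\<exists>B \<in> best_r1 n d T. B \<in> Sym n d"
    by (rule symmetric_best_r1_limit[OF _ lim]) (use assms(1) B in auto)
qed

end
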